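(* Let $X,Y$ be positive words and suppose $a_{ts}X\doteq a_{rq}Y$ (with $n\ge t>s\ge1$, $n\ge r>q\ge1$). Then: (I) If $t=r$ and $s=q$, then $X\doteq Y$. (II) (three distinct indices) (i) If $t=r$ and $q<s$, then $X\doteq a_{sq}Z$, $Y\doteq a_{ts}Z$ for some positive word $Z$; (ii) if $t=r$ and $s<q$, then $X\doteq a_{tq}Z$, $Y\doteq a_{qs}Z$; (iii) if $t=q$, then $X\doteq a_{rs}Z$, $Y\doteq a_{ts}Z$; (iv) if $s=r$, then $X\doteq a_{sq}Z$, $Y\doteq a_{tq}Z$; (v) if $s=q$ and $r<t$, then $X\doteq a_{tr}Z$, $Y\doteq a_{ts}Z$; (vi) if $s=q$ and $t<r$, then $X\doteq a_{rs}Z$, $Y\doteq a_{rt}Z$; in each case for some positive word $Z$. (III) If the four indices are distinct and $(t-r)(t-q)(s-r)(s-q)>0$, then $X\doteq a_{rq}Z$ and $Y\doteq a_{ts}Z$ for some positive word $Z$. (IV) If the four indices are distinct: (i) if $q<s<r<t$, then $X\doteq a_{tr}a_{sq}Z$ and $Y\doteq a_{tq}a_{rs}Z$ for some positive word $Z$; (ii) if $s<q<t<r$, then $X\doteq a_{tq}a_{rs}Z$ and $Y\doteq a_{rt}a_{qs}Z$ for some positive word $Z$.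
   Context: $B_n$ is the $n$-string braid group with band generators $a_{ts}$ ($n\ge t>s\ge1$), where $a_{ts}=(\sigma_{t-1}\cdots\sigma_{s+1})\sigma_s(\sigma_{s+1}^{-1}\cdots\sigma_{t-1}^{-1})$. The band relations are: (R1) $a_{ts}a_{rq}=a_{rq}a_{ts}$ if $(t-r)(t-q)(s-r)(s-q)>0$; (R2) $a_{ts}a_{sr}=a_{tr}a_{ts}=a_{sr}a_{tr}$ for $n\ge t>s>r\ge1$. A positive word is a word in positive powers of the $a_{ts}$. Two positive words $X,Y$ are positively equivalent, $X\doteq Y$, if one can be transformed into the other by a finite sequence of single direct applications of relations (R1), (R2) to subwords. *)

theory Defs
  imports Main
begin

text \<open>The band generator a_{ts} is represented by the pair (t,s).
  A positive word is a list of such pairs.\<close>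

type_synonym bgen = "nat \<times> nat"
type_synonym pword = "bgen list"

definition valid_gen :: "nat \<Rightarrow> bgen \<Rightarrow> bool" where
  "valid_gen n g \<longleftrightarrow> (case g of (t, s) \<Rightarrow> 1 \<le> s \<and> s < t \<and> t \<le> n)"

definition pos_word :: "nat \<Rightarrow> pword \<Rightarrow> bool" where
  "pos_word n w \<longleftrightarrow> (\<forall>g\<in>set w. valid_gen n g)"

inductive band_rel :: "nat \<Rightarrow> pword \<Rightarrow> pword \<Rightarrow> bool" for n where
  R1: "\<lbrakk>valid_gen n (t, s); valid_gen n (r, q);
        (int t - int r) * (int t - int q) * (int s - int r) * (int s - int q) > 0\<rbrakk>
       \<Longrightarrow> band_rel n [(t, s), (r, q)] [(r, q), (t, s)]"
| R2a: "\<lbrakk>n \<ge> t; t > s; s > r; r \<ge> 1\<rbrakk>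
       \<Longrightarrow> band_rel n [(t, s), (s, r)] [(t, r), (t, s)]"
| R2b: "\<lbrakk>n \<ge> t; t > s; s > r; r \<ge> 1\<rbrakk>
       \<Longrightarrow> band_rel n [(t, r), (t, s)] [(s, r), (t, r)]"

definition band_step :: "nat \<Rightarrow> pword \<Rightarrow> pword \<Rightarrow> bool" where
  "band_step n X Y \<longleftrightarrow> (\<exists>u v l r. X = u @ l @ v \<and> Y = u @ r @ v \<and>
                          (band_rel n l r \<or> band_rel n r l))"

definition pos_equiv :: "nat \<Rightarrow> pword \<Rightarrow> pword \<Rightarrow> bool" where
  "pos_equiv n = (band_step n)\<^sup>*\<^sup>*"

end

(* Write f(a, b) for band_compl a b and ~ for positive equivalence, so that a f(a, b) ~ b f(b, a).
   All cases of the theorem are instances of one statement: a X ~ b Y implies X ~ f(a, b) Z and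
   Y ~ f(b, a) Z for some Z.  As in Dehornoy's theory of complemented presentations, this follows
   from the cube condition on triples of generators, expressed by right reversing.  The proof is
   by induction on the length of X, following the chain of elementary steps from a X to b Y: a
   step acting at the front is a defining relation a x ~ c y, and the cube condition for (a, b, c),
   with the induction hypothesis applied to the reversing steps, carries the factorization across
   it.  Reversing commutes with strictly monotone relabellings of the indices, and three generators
   involve at most six indices, so the cube condition for every n follows from a finite
   computation in B_6. *)

theory Submission
  imports Defs
begin

lemma pos_word_simps [simp]:
  "pos_word n []"
  "pos_word n (a # X) \<longleftrightarrow> valid_gen n a \<and> pos_word n X"
  "pos_word n (X @ Y) \<longleftrightarrow> pos_word n X \<and> pos_word n Y"
  by (auto simp: pos_word_def)

lemma band_rel_pos_word: "band_rel n l r \<Longrightarrow> pos_word n l \<and> pos_word n r"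
  by (induction rule: band_rel.induct) (auto simp: valid_gen_def)

lemma band_rel_shape:
  "band_rel n l r \<Longrightarrow> \<exists>x1 x2 y1 y2. l = [x1, x2] \<and> r = [y1, y2]"
  by (induction rule: band_rel.induct) auto

lemma symp_band_step: "symp (band_step n)"
  unfolding band_step_def by (rule sympI) blast

lemma band_step_length: "band_step n X Y \<Longrightarrow> length X = length Y"
  unfolding band_step_def using band_rel_shape by fastforce

lemma band_step_pos_word: "band_step n X Y \<Longrightarrow> pos_word n X \<Longrightarrow> pos_word n Y"
  unfolding band_step_def using band_rel_pos_word by fastforce

lemma band_step_append:
  "band_step n X Y \<Longrightarrow> band_step n (u @ X @ v) (u @ Y @ v)"
  unfolding band_step_def by (metis append.assoc)

lemma pos_equiv_refl [simp]: "pos_equiv n X X"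
  by (simp add: pos_equiv_def)

lemma pos_equiv_trans [trans]:
  "pos_equiv n X Y \<Longrightarrow> pos_equiv n Y W \<Longrightarrow> pos_equiv n X W"
  unfolding pos_equiv_def by (rule rtranclp_trans)

lemma pos_equiv_sym: "pos_equiv n X Y \<Longrightarrow> pos_equiv n Y X"
  unfolding pos_equiv_def by (rule sympD[OF symp_rtranclp[OF symp_band_step]])

lemma pos_equiv_append:
  "pos_equiv n X Y \<Longrightarrow> pos_equiv n (u @ X @ v) (u @ Y @ v)"
  unfolding pos_equiv_def
  by (induction rule: rtranclp_induct)
    (auto intro: rtranclp.rtrancl_into_rtrancl band_step_append)

lemma pos_equiv_append_left: "pos_equiv n X Y \<Longrightarrow> pos_equiv n (u @ X) (u @ Y)"
  using pos_equiv_append[of n X Y u "[]"] by simp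

lemma pos_equiv_append_right: "pos_equiv n X Y \<Longrightarrow> pos_equiv n (X @ v) (Y @ v)"
  using pos_equiv_append[of n X Y "[]" v] by simp

lemma pos_equiv_Cons: "pos_equiv n X Y \<Longrightarrow> pos_equiv n (a # X) (a # Y)"
  using pos_equiv_append_left[of n X Y "[a]"] by simp

lemma pos_equiv_length: "pos_equiv n X Y \<Longrightarrow> length X = length Y"
  unfolding pos_equiv_def
  by (induction rule: rtranclp_induct) (auto dest: band_step_length)

lemma pos_equiv_pos_word: "pos_equiv n X Y \<Longrightarrow> pos_word n X \<Longrightarrow> pos_word n Y"
  unfolding pos_equiv_def
  by (induction rule: rtranclp_induct) (auto dest: band_step_pos_word)

lemma band_rel_pos_equiv: "band_rel n l r \<Longrightarrow> pos_equiv n (l @ v) (r @ v)"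
  unfolding pos_equiv_def band_step_def by (rule r_into_rtranclp) (metis append_Nil)

lemma pos_equiv_R1:
  "valid_gen n (t, s) \<Longrightarrow> valid_gen n (r, q) \<Longrightarrow>
   (int t - int r) * (int t - int q) * (int s - int r) * (int s - int q) > 0 \<Longrightarrow>
   pos_equiv n ((t, s) # (r, q) # v) ((r, q) # (t, s) # v)"
  using band_rel_pos_equiv[OF band_rel.R1, of n t s r q v] by simp

lemma pos_equiv_R2a:
  "n \<ge> t \<Longrightarrow> t > s \<Longrightarrow> s > r \<Longrightarrow> r \<ge> 1 \<Longrightarrow>
   pos_equiv n ((t, s) # (s, r) # v) ((t, r) # (t, s) # v)"
  using band_rel_pos_equiv[OF band_rel.R2a, of t n s r v] by simp

lemma pos_equiv_R2b:
  "n \<ge> t \<Longrightarrow> t > s \<Longrightarrow> s > r \<Longrightarrow> r \<ge> 1 \<Longrightarrow>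
   pos_equiv n ((t, r) # (t, s) # v) ((s, r) # (t, r) # v)"
  using band_rel_pos_equiv[OF band_rel.R2b, of t n s r v] by simp

lemma chord_factor_pos_iff:
  fixes s t r :: nat
  assumes "s < t"
  shows "0 < (int t - int r) * (int s - int r) \<longleftrightarrow> r < s \<or> t < r"
  using assms by (auto simp: zero_less_mult_iff)

lemma chord_factor_neg_iff:
  fixes s t r :: nat
  assumes "s < t"
  shows "(int t - int r) * (int s - int r) < 0 \<longleftrightarrow> s < r \<and> r < t"
  using assms by (auto simp: mult_less_0_iff)

lemma commute_product_pos_iff:
  fixes t s r q :: nat
  assumes "s < t"
  shows "(int t - int r) * (int t - int q) * (int s - int r) * (int s - int q) > 0 \<longleftrightarrow>
    (r < s \<or> t < r) \<and> (q < s \<or> t < q) \<or> (s < r \<and> r < t) \<and> (s < q \<and> q < t)"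
proof -
  have "(int t - int r) * (int t - int q) * (int s - int r) * (int s - int q)
      = ((int t - int r) * (int s - int r)) * ((int t - int q) * (int s - int q))"
    by (simp add: algebra_simps)
  also have "0 < \<dots> \<longleftrightarrow>
      0 < (int t - int r) * (int s - int r) \<and> 0 < (int t - int q) * (int s - int q) \<or>
      (int t - int r) * (int s - int r) < 0 \<and> (int t - int q) * (int s - int q) < 0"
    by (rule zero_less_mult_iff)
  finally show ?thesis
    unfolding chord_factor_pos_iff[OF assms] chord_factor_neg_iff[OF assms] .
qed

section \<open>The complement of two band generators\<close>

(* The cases are those of parts (I)-(IV) of the theorem. *)
definition band_compl :: "bgen \<Rightarrow> bgen \<Rightarrow> pword" where
  "band_compl a b = (case a of (t, s) \<Rightarrow> case b of (r, q) \<Rightarrow>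
    if t = r \<and> s = q then [] else
    if t = r then (if q < s then [(s, q)] else [(t, q)]) else
    if t = q then [(r, s)] else
    if s = r then [(s, q)] else
    if s = q then (if r < t then [(t, r)] else [(r, s)]) else
    if q < s \<and> s < r \<and> r < t then [(t, r), (s, q)] else
    if s < q \<and> q < t \<and> t < r then [(t, q), (r, s)] else [(r, q)])"

lemma band_compl_self [simp]: "band_compl a a = []"
  by (cases a) (simp add: band_compl_def)

lemma band_compl_pos_word:
  "valid_gen n a \<Longrightarrow> valid_gen n b \<Longrightarrow> pos_word n (band_compl a b)"
  by (cases a; cases b) (auto simp: band_compl_def valid_gen_def)

lemma band_compl_equiv_ordered:
  assumes ts: "valid_gen n (t, s)" and rq: "valid_gen n (r, q)"
    and "r < t \<or> r = t \<and> q \<le> s"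
  shows "pos_equiv n ((t, s) # band_compl (t, s) (r, q) @ v)
    ((r, q) # band_compl (r, q) (t, s) @ v)"
proof -
  have bounds: "1 \<le> s" "s < t" "t \<le> n" "1 \<le> q" "q < r" "r \<le> n"
    using ts rq by (auto simp: valid_gen_def)
  consider (equal) "r = t" "q = s" | (same_top) "r = t" "q < s" | (adjacent) "r < t" "s = r"
    | (same_bottom) "r < t" "s = q" | (linked) "q < s" "s < r" "r < t"
    | (unlinked) "r < t" "s < q \<or> r < s"
    using assms by linarith
  then show ?thesis
  proof cases
    case equal
    then show ?thesis by simp
  next
    case same_top
    then show ?thesis
      using bounds pos_equiv_R2a[of t n s q v] by (simp add: band_compl_def)
  next
    case adjacent
    have "pos_equiv n ((t, r) # (r, q) # v) ((t, q) # (t, r) # v)"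
      using adjacent bounds by (intro pos_equiv_R2a) auto
    also have "pos_equiv n \<dots> ((r, q) # (t, q) # v)"
      using adjacent bounds by (intro pos_equiv_R2b) auto
    finally show ?thesis using adjacent bounds by (simp add: band_compl_def)
  next
    case same_bottom
    then show ?thesis
      using bounds pos_equiv_R2b[of t n r s v] by (simp add: band_compl_def)
  next
    case linked
    have "pos_equiv n ((t, s) # (t, r) # (s, q) # v) ((r, s) # (t, s) # (s, q) # v)"
      using linked bounds by (intro pos_equiv_R2b) auto
    also have "pos_equiv n \<dots> ((r, s) # (t, q) # (t, s) # v)"
      using linked bounds by (intro pos_equiv_Cons pos_equiv_R2a) auto
    also have "pos_equiv n \<dots> ((r, s) # (s, q) # (t, q) # v)"
      using linked bounds by (intro pos_equiv_Cons pos_equiv_R2b) auto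
    also have "pos_equiv n \<dots> ((r, q) # (r, s) # (t, q) # v)"
      using linked bounds by (intro pos_equiv_R2a) auto
    finally show ?thesis using linked by (simp add: band_compl_def)
  next
    case unlinked
    then have "(int t - int r) * (int t - int q) * (int s - int r) * (int s - int q) > 0"
      using bounds by (auto simp: commute_product_pos_iff)
    moreover have "band_compl (t, s) (r, q) = [(r, q)]" "band_compl (r, q) (t, s) = [(t, s)]"
      using unlinked bounds by (auto simp: band_compl_def)
    ultimately show ?thesis using pos_equiv_R1[OF ts rq] by simp
  qed
qed

theorem band_compl_equiv:
  assumes "valid_gen n a" and "valid_gen n b"
  shows "pos_equiv n (a # band_compl a b @ v) (b # band_compl b a @ v)"
proof -
  obtain t s where a: "a = (t, s)" by (cases a)
  obtain r q where b: "b = (r, q)" by (cases b)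
  consider "r < t \<or> r = t \<and> q \<le> s" | "t < r \<or> t = r \<and> s \<le> q" by linarith
  then show ?thesis
  proof cases
    case 1
    with assms show ?thesis unfolding a b by (rule band_compl_equiv_ordered)
  next
    case 2
    with assms have "pos_equiv n (b # band_compl b a @ v) (a # band_compl a b @ v)"
      unfolding a b by (intro band_compl_equiv_ordered)
    then show ?thesis by (rule pos_equiv_sym)
  qed
qed

lemma band_rel_compl:
  "band_rel n [a, x] [c, y] \<Longrightarrow> a \<noteq> c \<and> band_compl a c = [x] \<and> band_compl c a = [y]"
  by (cases rule: band_rel.cases)
    (auto simp: band_compl_def valid_gen_def commute_product_pos_iff)

lemma band_step_Cons_cases:
  assumes "band_step n (a # X) (c # U)"
  shows "c = a \<and> band_step n X U \<or>
    (\<exists>x y V. X = x # V \<and> U = y # V \<and>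
      a \<noteq> c \<and> band_compl a c = [x] \<and> band_compl c a = [y])"
proof -
  obtain u v l r where eq: "a # X = u @ l @ v" "c # U = u @ r @ v"
    and rel: "band_rel n l r \<or> band_rel n r l"
    using assms unfolding band_step_def by blast
  show ?thesis
  proof (cases u)
    case Nil
    obtain l1 x r1 y where "l = [l1, x]" "r = [r1, y]"
      using rel band_rel_shape by blast
    with eq Nil have lr: "l = [a, x]" "r = [c, y]" and "X = x # v" "U = y # v"
      by simp_all
    moreover have "a \<noteq> c \<and> band_compl a c = [x] \<and> band_compl c a = [y]"
      using rel band_rel_compl[of n a x c y] band_rel_compl[of n c y a x] unfolding lr by auto
    ultimately show ?thesis by blast
  next
    case (Cons u0 u')
    with eq have "c = a" "X = u' @ l @ v" "U = u' @ r @ v" by simp_all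
    then show ?thesis using rel unfolding band_step_def by blast
  qed
qed

section \<open>Right reversing\<close>

(* Right reversing of the signed word u^-1 w, cut off after k levels of recursion: Some (p, q)
   means that u^-1 w reverses to p q^-1, whence u p ~ w q; None means that the fuel ran out. *)
fun right_reverse :: "nat \<Rightarrow> pword \<Rightarrow> pword \<Rightarrow> (pword \<times> pword) option" where
  "right_reverse 0 u w = None"
| "right_reverse (Suc k) [] w = Some (w, [])"
| "right_reverse (Suc k) (a # u) [] = Some ([], a # u)"
| "right_reverse (Suc k) (a # u) (b # w) =
    (case right_reverse k u (band_compl a b) of None \<Rightarrow> None | Some (p1, q1) \<Rightarrow>
     case right_reverse k (band_compl b a) w of None \<Rightarrow> None | Some (p2, q2) \<Rightarrow>
     case right_reverse k q1 p2 of None \<Rightarrow> None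
     | Some (p3, q3) \<Rightarrow> Some (p1 @ p3, q2 @ q3))"

lemma right_reverse_SomeE:
  assumes "right_reverse (Suc k) (a # u) (b # w) = Some (p, q)"
  obtains p1 q1 p2 q2 p3 q3 where "right_reverse k u (band_compl a b) = Some (p1, q1)"
    and "right_reverse k (band_compl b a) w = Some (p2, q2)"
    and "right_reverse k q1 p2 = Some (p3, q3)" and "p = p1 @ p3" and "q = q2 @ q3"
  using assms by (auto split: option.splits)

lemma right_reverse_pos_word:
  "right_reverse k u w = Some (p, q) \<Longrightarrow> pos_word n u \<Longrightarrow> pos_word n w \<Longrightarrow>
   pos_word n p \<and> pos_word n q"
proof (induction k u w arbitrary: p q rule: right_reverse.induct)
  case (4 k a u b w)
  from "4.prems"(1) obtain p1 q1 p2 q2 p3 q3 where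
    r1: "right_reverse k u (band_compl a b) = Some (p1, q1)"
    and r2: "right_reverse k (band_compl b a) w = Some (p2, q2)"
    and r3: "right_reverse k q1 p2 = Some (p3, q3)" and "p = p1 @ p3" "q = q2 @ q3"
    by (rule right_reverse_SomeE)
  moreover note IH =
    "4.IH"(1)[OF r1] "4.IH"(2)[OF r1 refl r2] "4.IH"(3)[OF r1 refl r2 refl r3]
  ultimately show ?case using "4.prems" band_compl_pos_word by (simp add: IH)
qed auto

theorem right_reverse_pos_equiv:
  "right_reverse k u w = Some (p, q) \<Longrightarrow> pos_word n u \<Longrightarrow> pos_word n w \<Longrightarrow>
   pos_equiv n (u @ p) (w @ q)"
proof (induction k u w arbitrary: p q rule: right_reverse.induct)
  case (4 k a u b w)
  from "4.prems"(1) obtain p1 q1 p2 q2 p3 q3 where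
    r1: "right_reverse k u (band_compl a b) = Some (p1, q1)"
    and r2: "right_reverse k (band_compl b a) w = Some (p2, q2)"
    and r3: "right_reverse k q1 p2 = Some (p3, q3)" and pq: "p = p1 @ p3" "q = q2 @ q3"
    by (rule right_reverse_SomeE)
  have valid: "valid_gen n a" "pos_word n u" "valid_gen n b" "pos_word n w"
    using "4.prems" by auto
  then have compl: "pos_word n (band_compl a b)" "pos_word n (band_compl b a)"
    using band_compl_pos_word by auto
  have q1: "pos_word n q1" and p2: "pos_word n p2"
    using right_reverse_pos_word[OF r1] right_reverse_pos_word[OF r2] valid compl by auto
  have "pos_equiv n (a # u @ p1 @ p3) (a # band_compl a b @ q1 @ p3)"
    using pos_equiv_Cons[OF pos_equiv_append_right[OF "4.IH"(1)[OF r1 valid(2) compl(1)]]]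
    by simp
  also have "pos_equiv n \<dots> (b # band_compl b a @ q1 @ p3)"
    using band_compl_equiv[OF valid(1,3)] by simp
  also have "pos_equiv n \<dots> (b # band_compl b a @ p2 @ q3)"
    using "4.IH"(3)[OF r1 refl r2 refl r3 q1 p2]
    by (intro pos_equiv_Cons pos_equiv_append_left)
  also have "pos_equiv n \<dots> (b # w @ q2 @ q3)"
    using pos_equiv_Cons[OF pos_equiv_append_right[OF "4.IH"(2)[OF r1 refl r2 compl(2) valid(4)]]]
    by simp
  finally show ?case using pq by simp
qed auto

section \<open>The cube condition\<close>

lemma strict_mono_cover:
  fixes I :: "nat set"
  assumes "finite I" and "0 \<notin> I"
  obtains h :: "nat \<Rightarrow> nat" where "strict_mono h" and "I \<subseteq> h ` {1..card I}"
proof -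
  obtain xs where sorted: "sorted_wrt (<) xs" and set: "set xs = I"
    and len: "length xs = card I"
    using finite_set_strict_sorted[OF assms(1)] by blast
  define ys where "ys = 0 # xs"
  have sorted_ys: "sorted_wrt (<) ys"
    using sorted set assms(2) by (auto simp: ys_def intro: gr0I)
  define h where "h k = (if k < length ys then ys ! k else last ys + k)" for k
  have "h k < h (Suc k)" for k
  proof (cases "Suc k < length ys")
    case True
    then show ?thesis using sorted_wrt_nth_less[OF sorted_ys] by (simp add: h_def)
  next
    case False
    have "ys ! k = last ys" if "k < length ys"
    proof -
      have "length ys = Suc k" using that False by simp
      then show ?thesis using last_conv_nth[of ys] by (cases ys) auto
    qed
    then show ?thesis using False by (simp add: h_def)
  qed
  then have "strict_mono h" by (rule strict_mono_Suc_iff[THEN iffD2, rule_format])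
  moreover have "I \<subseteq> h ` {1..card I}"
  proof
    fix x assume "x \<in> I"
    then obtain i where "i < length xs" "x = xs ! i"
      using set by (auto simp: in_set_conv_nth)
    then have "x = h (Suc i)" "Suc i \<in> {1..card I}" using len by (auto simp: h_def ys_def)
    then show "x \<in> h ` {1..card I}" by blast
  qed
  ultimately show ?thesis by (rule that)
qed

lemma band_compl_map:
  "strict_mono h \<Longrightarrow>
   band_compl (map_prod h h a) (map_prod h h b) = map (map_prod h h) (band_compl a b)"
  by (cases a; cases b) (simp add: band_compl_def strict_mono_less strict_mono_eq)

lemma right_reverse_map:
  assumes "strict_mono h"
  shows "right_reverse k (map (map_prod h h) u) (map (map_prod h h) w)
    = map_option (map_prod (map (map_prod h h)) (map (map_prod h h))) (right_reverse k u w)"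
  by (induction k u w rule: right_reverse.induct)
    (simp_all add: band_compl_map[OF assms] split: option.split)

(* Dehornoy's cube condition at the triple (a, b, c), for the case a x ~ c y of a defining
   relation; fuel 5 suffices for all triples in B_6. *)
definition cube_closes :: "bgen \<Rightarrow> bgen \<Rightarrow> bgen \<Rightarrow> bgen \<Rightarrow> bgen \<Rightarrow> bool" where
  "cube_closes a b c x y \<longleftrightarrow>
    (case right_reverse 5 [y] (band_compl c b) of None \<Rightarrow> False | Some (P, Q) \<Rightarrow>
     case right_reverse 5 (x # P) (band_compl a b) of
       Some ([], R) \<Rightarrow>
         right_reverse 5 (band_compl b c @ Q) (band_compl b a @ R) = Some ([], [])
     | _ \<Rightarrow> False)"

lemma cube_closes_iff:
  "cube_closes a b c x y \<longleftrightarrow> (\<exists>P Q R.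
     right_reverse 5 [y] (band_compl c b) = Some (P, Q) \<and>
     right_reverse 5 (x # P) (band_compl a b) = Some ([], R) \<and>
     right_reverse 5 (band_compl b c @ Q) (band_compl b a @ R) = Some ([], []))"
  by (auto simp: cube_closes_def split: option.splits list.splits)

lemma cube_closes_map:
  assumes h: "strict_mono h" and "cube_closes a b c x y"
  shows "cube_closes (map_prod h h a) (map_prod h h b) (map_prod h h c)
    (map_prod h h x) (map_prod h h y)"
proof -
  let ?m = "map (map_prod h h)"
  obtain P Q R where
    PQ: "right_reverse 5 [y] (band_compl c b) = Some (P, Q)" and
    R: "right_reverse 5 (x # P) (band_compl a b) = Some ([], R)" and
    closed: "right_reverse 5 (band_compl b c @ Q) (band_compl b a @ R) = Some ([], [])"
    using assms(2) unfolding cube_closes_iff by blast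
  show ?thesis
    unfolding cube_closes_iff
  proof (intro exI conjI)
    show "right_reverse 5 [map_prod h h y] (band_compl (map_prod h h c) (map_prod h h b))
      = Some (?m P, ?m Q)"
      using right_reverse_map[OF h, of 5 "[y]" "band_compl c b"] PQ
      by (simp add: band_compl_map[OF h])
    show "right_reverse 5 (map_prod h h x # ?m P) (band_compl (map_prod h h a) (map_prod h h b))
      = Some ([], ?m R)"
      using right_reverse_map[OF h, of 5 "x # P" "band_compl a b"] R
      by (simp add: band_compl_map[OF h])
    show "right_reverse 5 (band_compl (map_prod h h b) (map_prod h h c) @ ?m Q)
        (band_compl (map_prod h h b) (map_prod h h a) @ ?m R) = Some ([], [])"
      using right_reverse_map[OF h, of 5 "band_compl b c @ Q" "band_compl b a @ R"] closed
      by (simp add: band_compl_map[OF h])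
  qed
qed

definition band_gens :: "nat \<Rightarrow> bgen list" where
  "band_gens n = [(t, s). t \<leftarrow> [1..<Suc n], s \<leftarrow> [1..<t]]"

lemma set_band_gens: "set (band_gens n) = {g. valid_gen n g}"
proof (intro set_eqI iffI)
  fix g assume "g \<in> {g. valid_gen n g}"
  then obtain t s where "g = (t, s)" "1 \<le> s" "s < t" "t \<le> n"
    by (auto simp: valid_gen_def)
  then show "g \<in> set (band_gens n)" unfolding band_gens_def by (auto intro!: bexI[of _ t])
qed (auto simp: band_gens_def valid_gen_def)

definition cube_check :: "bgen \<Rightarrow> bgen \<Rightarrow> bgen \<Rightarrow> bool" where
  "cube_check a b c \<longleftrightarrow> (a \<noteq> b \<longrightarrow> b \<noteq> c \<longrightarrow>
    (case (band_compl a c, band_compl c a) of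
      ([x], [y]) \<Rightarrow> cube_closes a b c x y
    | _ \<Rightarrow> True))"

lemma cube_check_B6:
  "list_all (\<lambda>a. list_all (\<lambda>b. list_all (cube_check a b) (band_gens 6)) (band_gens 6))
    (band_gens 6)"
  by code_simp

lemma cube_closes_B6:
  assumes "valid_gen 6 a" "valid_gen 6 b" "valid_gen 6 c" "a \<noteq> b" "b \<noteq> c"
    and "band_compl a c = [x]" "band_compl c a = [y]"
  shows "cube_closes a b c x y"
proof -
  have "cube_check a b c"
    using cube_check_B6 assms(1-3)
    unfolding list_all_iff set_band_gens mem_Collect_eq by blast
  then show ?thesis using assms(4-7) unfolding cube_check_def by simp
qed

lemma valid_gen_map_prod_preimage:
  assumes "strict_mono h" and "valid_gen n g" and "{fst g, snd g} \<subseteq> h ` {1..m}"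
  obtains g0 where "valid_gen m g0" and "g = map_prod h h g0"
proof -
  obtain t0 s0 where "t0 \<in> {1..m}" "s0 \<in> {1..m}" "g = (h t0, h s0)"
    using assms(3) by (cases g) auto
  moreover have "s0 < t0"
    using assms(2) \<open>g = (h t0, h s0)\<close> strict_mono_less[OF assms(1)]
    by (simp add: valid_gen_def)
  ultimately show ?thesis using that[of "(t0, s0)"] by (simp add: valid_gen_def)
qed

theorem band_cube:
  assumes valid: "valid_gen n a" "valid_gen n b" "valid_gen n c" and "a \<noteq> b" "b \<noteq> c"
    and x: "band_compl a c = [x]" and y: "band_compl c a = [y]"
  shows "cube_closes a b c x y"
proof -
  define I where "I = set [fst a, snd a, fst b, snd b, fst c, snd c]"
  have "0 \<notin> I" using valid by (auto simp: I_def valid_gen_def split: prod.splits)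
  then obtain h where h: "strict_mono h" and "I \<subseteq> h ` {1..card I}"
    using strict_mono_cover[of I] by (auto simp: I_def)
  moreover have "card I \<le> 6"
    using card_length[of "[fst a, snd a, fst b, snd b, fst c, snd c]"] by (simp add: I_def)
  ultimately have cover: "I \<subseteq> h ` {1..6}" by auto
  have preimage: "\<exists>g0. valid_gen 6 g0 \<and> g = map_prod h h g0"
    if "valid_gen n g" and "{fst g, snd g} \<subseteq> I" for g
    using valid_gen_map_prod_preimage[OF h that(1) order_trans[OF that(2) cover]] by blast
  obtain a0 b0 c0 where
    "valid_gen 6 a0" "a = map_prod h h a0" "valid_gen 6 b0" "b = map_prod h h b0"
    "valid_gen 6 c0" "c = map_prod h h c0"
    using preimage[OF valid(1)] preimage[OF valid(2)] preimage[OF valid(3)]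
    by (auto simp: I_def)
  moreover obtain x0 y0 where "band_compl a0 c0 = [x0]" "x = map_prod h h x0"
      "band_compl c0 a0 = [y0]" "y = map_prod h h y0"
    using x y unfolding \<open>a = map_prod h h a0\<close> \<open>c = map_prod h h c0\<close> band_compl_map[OF h]
    by (auto simp: map_eq_Cons_conv)
  ultimately show ?thesis
    using cube_closes_map[OF h cube_closes_B6] \<open>a \<noteq> b\<close> \<open>b \<noteq> c\<close> by blast
qed

section \<open>Factorization through the complement\<close>

definition lcm_factorization_below :: "nat \<Rightarrow> nat \<Rightarrow> bool" where
  "lcm_factorization_below n L \<longleftrightarrow> (\<forall>a b X Y.
    length X < L \<longrightarrow> pos_word n (a # X) \<longrightarrow> pos_equiv n (a # X) (b # Y) \<longrightarrow>
    (\<exists>Z. pos_equiv n X (band_compl a b @ Z) \<and> pos_equiv n Y (band_compl b a @ Z)))"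

lemma lcm_factorization_belowD:
  "lcm_factorization_below n L \<Longrightarrow> length X < L \<Longrightarrow> pos_word n (a # X) \<Longrightarrow>
   pos_equiv n (a # X) (b # Y) \<Longrightarrow>
   \<exists>Z. pos_equiv n X (band_compl a b @ Z) \<and> pos_equiv n Y (band_compl b a @ Z)"
  unfolding lcm_factorization_below_def by blast

lemma right_reverse_factor:
  "lcm_factorization_below n L \<Longrightarrow> right_reverse k u w = Some (p, q) \<Longrightarrow>
   length (u @ V) \<le> L \<Longrightarrow> pos_word n (u @ V) \<Longrightarrow> pos_equiv n (u @ V) (w @ Y) \<Longrightarrow>
   \<exists>Z. pos_equiv n V (p @ Z) \<and> pos_equiv n Y (q @ Z)"
proof (induction k u w arbitrary: p q V Y rule: right_reverse.induct)
  case (2 k w)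
  then show ?case by (intro exI[of _ Y]) simp
next
  case (3 k a u)
  then show ?case by (intro exI[of _ V]) (auto intro: pos_equiv_sym)
next
  case (4 k a u b w)
  note H = "4.prems"(1)
  from "4.prems"(2) obtain p1 q1 p2 q2 p3 q3 where
    r1: "right_reverse k u (band_compl a b) = Some (p1, q1)"
    and r2: "right_reverse k (band_compl b a) w = Some (p2, q2)"
    and r3: "right_reverse k q1 p2 = Some (p3, q3)" and pq: "p = p1 @ p3" "q = q2 @ q3"
    by (rule right_reverse_SomeE)
  have len: "length (u @ V) < L" and valid: "pos_word n (a # u @ V)"
    and eq: "pos_equiv n (a # u @ V) (b # w @ Y)"
    using "4.prems"(3-5) by auto
  obtain Z0 where z0: "pos_equiv n (u @ V) (band_compl a b @ Z0)"
    "pos_equiv n (w @ Y) (band_compl b a @ Z0)"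
    using lcm_factorization_belowD[OF H len valid eq] by blast
  have valid_Z0: "pos_word n (band_compl a b @ Z0)" "pos_word n (band_compl b a @ Z0)"
    using pos_equiv_pos_word[OF z0(1)] pos_equiv_pos_word[OF z0(2)]
      pos_equiv_pos_word[OF eq valid] valid by auto
  have len_Z0: "length (band_compl b a @ Z0) \<le> L" "length Z0 \<le> L"
    using len pos_equiv_length[OF eq] pos_equiv_length[OF z0(1)] pos_equiv_length[OF z0(2)]
    by auto
  obtain Z1 where z1: "pos_equiv n V (p1 @ Z1)" "pos_equiv n Z0 (q1 @ Z1)"
    using "4.IH"(1)[OF H r1 _ _ z0(1)] len valid by auto
  obtain Z2 where z2: "pos_equiv n Z0 (p2 @ Z2)" "pos_equiv n Y (q2 @ Z2)"
    using "4.IH"(2)[OF r1 refl H r2 len_Z0(1) valid_Z0(2) pos_equiv_sym[OF z0(2)]] by blast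
  have "pos_equiv n (q1 @ Z1) (p2 @ Z2)"
    using z1(2) z2(1) by (blast intro: pos_equiv_sym pos_equiv_trans)
  moreover have "pos_word n (q1 @ Z1)"
    using valid_Z0(1) pos_equiv_pos_word[OF z1(2)] by simp
  moreover have "length (q1 @ Z1) \<le> L"
    using len_Z0(2) pos_equiv_length[OF z1(2)] by simp
  ultimately obtain Z3 where z3: "pos_equiv n Z1 (p3 @ Z3)" "pos_equiv n Z2 (q3 @ Z3)"
    using "4.IH"(3)[OF r1 refl r2 refl H r3] by blast
  have "pos_equiv n V (p1 @ p3 @ Z3)"
    using z1(1) pos_equiv_append_left[OF z3(1)] by (rule pos_equiv_trans)
  moreover have "pos_equiv n Y (q2 @ q3 @ Z3)"
    using z2(2) pos_equiv_append_left[OF z3(2)] by (rule pos_equiv_trans)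
  ultimately show ?case using pq by auto
qed simp

lemma lcm_factorization_front:
  assumes H: "lcm_factorization_below n L" and len: "length V < L"
    and valid: "pos_word n (a # x # V)" "valid_gen n b" "valid_gen n c"
    and "a \<noteq> c" and x: "band_compl a c = [x]" and y: "band_compl c a = [y]"
    and U: "pos_equiv n (y # V) (band_compl c b @ Z1)"
    and Y: "pos_equiv n Y (band_compl b c @ Z1)"
  shows "\<exists>Z. pos_equiv n (x # V) (band_compl a b @ Z) \<and>
    pos_equiv n Y (band_compl b a @ Z)"
proof -
  have valid_y: "valid_gen n y"
    using band_compl_pos_word[of n c a] valid y by simp
  consider "b = a" | "b = c" | "b \<noteq> a" "b \<noteq> c" by blast
  then show ?thesis
  proof cases
    case 1
    with U y have "pos_equiv n (y # V) (y # Z1)" by simp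
    then have "pos_equiv n V Z1"
      using lcm_factorization_belowD[OF H len, of y y Z1] valid valid_y
      by (auto intro: pos_equiv_sym pos_equiv_trans)
    then have "pos_equiv n Y (x # V)"
      using Y x 1 by (auto intro: pos_equiv_trans pos_equiv_Cons pos_equiv_sym)
    then show ?thesis using 1 by (intro exI[of _ "x # V"]) simp
  next
    case 2
    then have "pos_equiv n Y (y # V)"
      using U Y by (auto intro: pos_equiv_sym pos_equiv_trans)
    then show ?thesis using 2 x y by (intro exI[of _ V]) simp
  next
    case 3
    obtain P Q R where
      PQ: "right_reverse 5 [y] (band_compl c b) = Some (P, Q)" and
      R: "right_reverse 5 (x # P) (band_compl a b) = Some ([], R)" and
      closed: "right_reverse 5 (band_compl b c @ Q) (band_compl b a @ R) = Some ([], [])"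
      using band_cube[of n a b c x y] 3 valid \<open>a \<noteq> c\<close> x y
      unfolding cube_closes_iff by auto
    obtain Z2 where z2: "pos_equiv n V (P @ Z2)" "pos_equiv n Z1 (Q @ Z2)"
      using right_reverse_factor[OF H PQ, of V Z1] U len valid valid_y by auto
    have valid_PQ: "pos_word n P" "pos_word n Q"
      using right_reverse_pos_word[OF PQ] valid_y band_compl_pos_word valid by auto
    then have valid_R: "pos_word n R"
      using right_reverse_pos_word[OF R] band_compl_pos_word valid by auto
    have "pos_equiv n (x # V) (x # P @ Z2)" using z2(1) by (rule pos_equiv_Cons)
    also have "pos_equiv n \<dots> (band_compl a b @ R @ Z2)"
      using pos_equiv_append_right[OF right_reverse_pos_equiv[OF R]] valid valid_PQ
        band_compl_pos_word by auto
    finally have X: "pos_equiv n (x # V) (band_compl a b @ R @ Z2)" .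
    have "pos_equiv n Y (band_compl b c @ Q @ Z2)"
      using Y pos_equiv_append_left[OF z2(2)] by (rule pos_equiv_trans)
    also have "pos_equiv n \<dots> (band_compl b a @ R @ Z2)"
      using pos_equiv_append_right[OF right_reverse_pos_equiv[OF closed]] valid valid_PQ valid_R
        band_compl_pos_word by auto
    finally show ?thesis using X by blast
  qed
qed

lemma lcm_factorization_Suc:
  assumes H: "lcm_factorization_below n L"
  shows "lcm_factorization_below n (Suc L)"
proof -
  have "\<exists>Z. pos_equiv n X (band_compl a b @ Z) \<and> pos_equiv n Y (band_compl b a @ Z)"
    if "(band_step n)\<^sup>*\<^sup>* (a # X) (b # Y)" and "length X = L" and "pos_word n (a # X)"
    for a b X Y
    using that
  proof (induction "a # X" arbitrary: a X rule: converse_rtranclp_induct)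
    case base
    then show ?case by (intro exI[of _ Y]) simp
  next
    case (step W)
    obtain c U where W: "W = c # U" and "length U = L"
      using band_step_length[OF step.hyps(1)] step.prems(1) by (cases W) auto
    moreover have valid_W: "pos_word n W"
      using band_step_pos_word[OF step.hyps(1) step.prems(2)] .
    ultimately obtain Z1 where U: "pos_equiv n U (band_compl c b @ Z1)"
      and Y: "pos_equiv n Y (band_compl b c @ Z1)"
      using step.hyps(3) by blast
    have "pos_word n (b # Y)"
      using pos_equiv_pos_word[OF step.hyps(2)[folded pos_equiv_def] valid_W] .
    with band_step_Cons_cases[OF step.hyps(1)[unfolded W]] show ?case
    proof (elim disjE exE conjE)
      assume "c = a" and "band_step n X U"
      then have "pos_equiv n X U" unfolding pos_equiv_def by blast
      then show ?thesis using U Y \<open>c = a\<close> by (blast intro: pos_equiv_trans)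
    next
      fix x y V
      assume X: "X = x # V" and "U = y # V" and front: "a \<noteq> c" "band_compl a c = [x]"
        "band_compl c a = [y]"
      then have "pos_equiv n (y # V) (band_compl c b @ Z1)" using U by simp
      moreover have "length V < L" "pos_word n (a # x # V)"
        using step.prems X by auto
      moreover have "valid_gen n b" "valid_gen n c"
        using \<open>pos_word n (b # Y)\<close> valid_W W by auto
      ultimately show ?thesis
        unfolding X using lcm_factorization_front[OF H _ _ _ _ front _ Y] by blast
    qed
  qed
  then show ?thesis
    using H unfolding lcm_factorization_below_def pos_equiv_def by (metis less_SucE)
qed

theorem lcm_factorization:
  assumes "pos_word n (a # X)" and "pos_equiv n (a # X) (b # Y)"
  shows "\<exists>Z. pos_equiv n X (band_compl a b @ Z) \<and> pos_equiv n Y (band_compl b a @ Z)"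
proof -
  have "lcm_factorization_below n L" for L
  proof (induction L)
    case 0
    then show ?case by (simp add: lcm_factorization_below_def)
  next
    case (Suc L)
    then show ?case by (rule lcm_factorization_Suc)
  qed
  then show ?thesis using lcm_factorization_belowD assms by blast
qed

theorem theorem2p3:
  fixes n t s r q :: nat and X Y :: pword
  assumes "pos_word n X" and "pos_word n Y"
    and "n \<ge> t" and "t > s" and "s \<ge> 1"
    and "n \<ge> r" and "r > q" and "q \<ge> 1"
    and "pos_equiv n ((t, s) # X) ((r, q) # Y)"
  shows
    "(t = r \<and> s = q \<longrightarrow> pos_equiv n X Y)
   \<and> (t = r \<and> q < s \<longrightarrow> (\<exists>Z. pos_word n Z \<and>
          pos_equiv n X ((s, q) # Z) \<and> pos_equiv n Y ((t, s) # Z)))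
   \<and> (t = r \<and> s < q \<longrightarrow> (\<exists>Z. pos_word n Z \<and>
          pos_equiv n X ((t, q) # Z) \<and> pos_equiv n Y ((q, s) # Z)))
   \<and> (t = q \<longrightarrow> (\<exists>Z. pos_word n Z \<and>
          pos_equiv n X ((r, s) # Z) \<and> pos_equiv n Y ((t, s) # Z)))
   \<and> (s = r \<longrightarrow> (\<exists>Z. pos_word n Z \<and>
          pos_equiv n X ((s, q) # Z) \<and> pos_equiv n Y ((t, q) # Z)))
   \<and> (s = q \<and> r < t \<longrightarrow> (\<exists>Z. pos_word n Z \<and>
          pos_equiv n X ((t, r) # Z) \<and> pos_equiv n Y ((t, s) # Z)))
   \<and> (s = q \<and> t < r \<longrightarrow> (\<exists>Z. pos_word n Z \<and>
          pos_equiv n X ((r, s) # Z) \<and> pos_equiv n Y ((r, t) # Z)))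
   \<and> (distinct [t, s, r, q] \<and>
        (int t - int r) * (int t - int q) * (int s - int r) * (int s - int q) > 0
        \<longrightarrow> (\<exists>Z. pos_word n Z \<and>
          pos_equiv n X ((r, q) # Z) \<and> pos_equiv n Y ((t, s) # Z)))
   \<and> (q < s \<and> s < r \<and> r < t \<longrightarrow> (\<exists>Z. pos_word n Z \<and>
          pos_equiv n X ((t, r) # (s, q) # Z) \<and> pos_equiv n Y ((t, q) # (r, s) # Z)))
   \<and> (s < q \<and> q < t \<and> t < r \<longrightarrow> (\<exists>Z. pos_word n Z \<and>
          pos_equiv n X ((t, q) # (r, s) # Z) \<and> pos_equiv n Y ((r, t) # (q, s) # Z)))"
proof -
  have ts: "valid_gen n (t, s)" and rq: "valid_gen n (r, q)"
    using assms by (auto simp: valid_gen_def)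
  obtain Z where X: "pos_equiv n X (band_compl (t, s) (r, q) @ Z)"
    and Y: "pos_equiv n Y (band_compl (r, q) (t, s) @ Z)"
    using lcm_factorization[of n "(t, s)" X "(r, q)" Y] assms(1,9) ts by auto
  have "pos_word n Z"
    using pos_equiv_pos_word[OF X assms(1)] by simp
  have linked: "pos_equiv n ((r, s) # (t, q) # Z) ((t, q) # (r, s) # Z)"
    if "q < s" "s < r" "r < t"
    using that assms by (intro pos_equiv_R1) (auto simp: valid_gen_def commute_product_pos_iff)
  show ?thesis
  proof (intro conjI impI)
    assume "t = r \<and> s = q"
    then show "pos_equiv n X Y" using X pos_equiv_sym[OF Y] by (auto intro: pos_equiv_trans)
  next
    assume "q < s \<and> s < r \<and> r < t"
    then show "\<exists>Z. pos_word n Z \<and>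
      pos_equiv n X ((t, r) # (s, q) # Z) \<and> pos_equiv n Y ((t, q) # (r, s) # Z)"
      using X Y linked \<open>pos_word n Z\<close> by (auto simp: band_compl_def intro: pos_equiv_trans)
  qed (use X Y \<open>pos_word n Z\<close> assms(4,7) in
      \<open>auto simp: band_compl_def commute_product_pos_iff\<close>)
qed

end
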